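(* Consider the firefighter game on the infinite square grid $\mathbb{L}_2=\mathbb{Z}\times\mathbb{Z}$ (described in the context) with an arbitrary ignition vertex. Say that a firefighter sequence $(f_i)_{i\geq 1}$ of non-negative integers satisfies the Condition if there exists $N\geq 1$ with $\sum_{i=1}^N f_i\geq 4N$. (a) (Offline.) For every firefighter sequence $(f_i)_{i\geq 1}$ satisfying the Condition, Player 1, knowing the entire sequence in advance, has a strategy that wins, i.e. contains the fire. (b) (Online.) The Condition is not sufficient for Player 1 to win the online version: for every online strategy of Player 1 there exists a firefighter sequence $(f_i)_{i\geq 1}$ satisfying the Condition against which that strategy loses. Moreover, 5 turns are enough to make any online strategy of Player 1 fail: such a sequence can be chosen so that the Condition holds with some $N\leq 5$ and $f_i=0$ for all $i>5$.
   Context: The grid $\mathbb{L}_2$ has vertex set $\mathbb{Z}\times\mathbb{Z}$, with $(x,y)$ adjacent to $(x',y')$ iff $|x-x'|+|y-y'|=1$. A fire starts at an ignition vertex $v$ at time $0$ (so $v$ is burning). A firefighter sequence is a sequence $(f_i)_{i\geq 1}$ of non-negative integers. At each turn $i\geq 1$: Player 1 chooses at most $f_i$ vertices that are neither burning nor protected and protects them (places a firefighter on each); then the fire spreads from every burning vertex to all of its unprotected neighbours. Once a vertex is burning or protected it remains so forever; unused firefighters are not carried over to later turns. Player 2 wins if at every turn some new vertex starts burning; otherwise (i.e. if at some turn no new vertex catches fire, so the fire is contained) Player 1 wins. In the offline version Player 1 knows the whole sequence $(f_i)_{i\geq 1}$ in advance. In the online version the sequence is chosen by Player 2 (the adversary)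 and only revealed turn by turn: at turn $i$ Player 2 reveals $f_i$ to Player 1 just before Player 1 places firefighters, so an online strategy of Player 1 chooses its moves at turn $i$ based only on $f_1,\dots,f_i$ and the history of the game so far. *)

theory Defs
  imports Main
begin

type_synonym vtx = "int \<times> int"

definition adj :: "vtx \<Rightarrow> vtx \<Rightarrow> bool" where
  "adj p q \<longleftrightarrow> \<bar>fst p - fst q\<bar> + \<bar>snd p - snd q\<bar> = 1"

text \<open>State (burning set, protected set) after turn i, for ignition vertex v and
  a sequence of protected sets S (S i = vertices protected at turn i, i >= 1).\<close>
fun state :: "vtx \<Rightarrow> (nat \<Rightarrow> vtx set) \<Rightarrow> nat \<Rightarrow> vtx set \<times> vtx set" where
  "state v S 0 = ({v}, {})"
| "state v S (Suc i) =
     (let B = fst (state v S i); P' = snd (state v S i) \<union> S (Suc i)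
      in (B \<union> {w. w \<notin> P' \<and> (\<exists>u\<in>B. adj u w)}, P'))"

definition legal_move :: "vtx \<Rightarrow> (nat \<Rightarrow> nat) \<Rightarrow> (nat \<Rightarrow> vtx set) \<Rightarrow> nat \<Rightarrow> bool" where
  "legal_move v f S i \<longleftrightarrow>
     finite (S i) \<and> card (S i) \<le> f i \<and>
     S i \<inter> (fst (state v S (i - 1)) \<union> snd (state v S (i - 1))) = {}"

definition P1_wins :: "vtx \<Rightarrow> (nat \<Rightarrow> nat) \<Rightarrow> (nat \<Rightarrow> vtx set) \<Rightarrow> bool" where
  "P1_wins v f S \<longleftrightarrow>
     (\<exists>n\<ge>1. (\<forall>i\<in>{1..n}. legal_move v f S i) \<and>
             fst (state v S n) = fst (state v S (n - 1)))"

text \<open>The Condition: some N >= 1 with f_1 + ... + f_N >= 4N (f 0 is unused).\<close>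
definition condition :: "(nat \<Rightarrow> nat) \<Rightarrow> bool" where
  "condition f \<longleftrightarrow> (\<exists>N\<ge>1. (\<Sum>i=1..N. f i) \<ge> 4 * N)"

text \<open>An online strategy maps the revealed prefix [f_1,...,f_i] to the set protected at
  turn i (the history of the game is determined by this prefix and the strategy).\<close>
type_synonym online_strategy = "nat list \<Rightarrow> vtx set"

definition online_play :: "online_strategy \<Rightarrow> (nat \<Rightarrow> nat) \<Rightarrow> nat \<Rightarrow> vtx set" where
  "online_play \<sigma> f i = \<sigma> (map f [1..<Suc i])"

end

theory Submission
  imports Defs
begin

text \<open>
  (a) If \<open>f\<^sub>1 + \<dots> + f\<^sub>N \<ge> 4N\<close>, the at most \<open>4N\<close> vertices at \<open>l\<^sub>1\<close>-distance \<open>N\<close> from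
  the ignition can be protected during the turns \<open>1, \<dots>, N\<close>, each of them before the fire, which
  advances one step per turn, reaches it. At turn \<open>N\<close> the fire then has no unprotected vertex to
  spread to.

  (b) The adversary reveals \<open>f\<^sub>1 = 1\<close> and, depending on the vertex \<open>x\<close> protected at turn 1,
  chooses \<open>K \<in> {2..5}\<close> and reveals \<open>f\<^sub>K = 4K - 1\<close> and \<open>f\<^sub>i = 0\<close> otherwise, so that
  \<open>f\<^sub>1 + \<dots> + f\<^sub>K = 4K\<close>. Up to a symmetry of the grid the ignition is the origin and \<open>x\<close> lies in
  the quadrant \<open>a \<ge> 1, b \<ge> 0\<close>. Until turn \<open>K - 1\<close> only \<open>x\<close> is protected, so the fire fills the
  ball of radius \<open>K - 1\<close> except the part of the ray through \<open>x\<close> behind \<open>x\<close>. From there start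
  \<open>4K\<close> outward paths through the \<open>4K\<close> vertices at distance \<open>K\<close>, with pairwise disjoint tails
  avoiding \<open>x\<close>. A contained fire needs a protected vertex on each tail, but only \<open>4K - 1\<close> are
  available besides \<open>x\<close>. The choice \<open>K = 4, 3, 5\<close> for \<open>x = (1,0), (1,1), (2,0)\<close> and \<open>K = 2\<close>
  otherwise makes such paths exist.
\<close>

section \<open>Spread of the fire\<close>

abbreviation burning :: "vtx \<Rightarrow> (nat \<Rightarrow> vtx set) \<Rightarrow> nat \<Rightarrow> vtx set" where
  "burning v S i \<equiv> fst (state v S i)"

abbreviation protected :: "vtx \<Rightarrow> (nat \<Rightarrow> vtx set) \<Rightarrow> nat \<Rightarrow> vtx set" where
  "protected v S i \<equiv> snd (state v S i)"

lemma protected_Suc: "protected v S (Suc i) = protected v S i \<union> S (Suc i)"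
  by (simp add: Let_def)

lemma burning_Suc:
  "burning v S (Suc i) =
     burning v S i \<union> {w. w \<notin> protected v S (Suc i) \<and> (\<exists>u\<in>burning v S i. adj u w)}"
  by (simp add: Let_def)

declare state.simps(2)[simp del]

lemma protected_eq_UN: "protected v S i = (\<Union>j\<in>{1..i}. S j)"
  by (induction i) (auto simp: protected_Suc atLeastAtMostSuc_conv)

lemma burning_mono: "i \<le> j \<Longrightarrow> burning v S i \<subseteq> burning v S j"
  by (induction j rule: dec_induct) (auto simp: burning_Suc)

lemma ignition_burning: "v \<in> burning v S i"
  using burning_mono[of 0 i v S] by simp

lemma contained_burning_closed:
  assumes "burning v S (Suc m) = burning v S m"
    and "u \<in> burning v S m" "adj u w" "w \<notin> protected v S (Suc m)"
  shows "w \<in> burning v S m"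
  using assms by (auto simp: burning_Suc)

lemma P1_winsE:
  assumes "P1_wins v f S"
  obtains m where "\<forall>i\<in>{1..Suc m}. legal_move v f S i" "burning v S (Suc m) = burning v S m"
proof -
  obtain n where "1 \<le> n" "\<forall>i\<in>{1..n}. legal_move v f S i" "burning v S n = burning v S (n - 1)"
    using assms unfolding P1_wins_def by blast
  then show ?thesis using that[of "n - 1"] by simp
qed

lemma protected_subset_active_turns:
  assumes "\<forall>j\<in>{1..n}. legal_move v f S j" "i \<le> n"
  shows "protected v S i \<subseteq> (\<Union>j\<in>{j\<in>{1..i}. f j \<noteq> 0}. S j)"
proof
  fix w assume "w \<in> protected v S i"
  then obtain j where j: "j \<in> {1..i}" "w \<in> S j" by (auto simp: protected_eq_UN)
  then have "legal_move v f S j" using assms by auto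
  then have "f j \<noteq> 0" using j(2) by (auto simp: legal_move_def)
  with j show "w \<in> (\<Union>j\<in>{j\<in>{1..i}. f j \<noteq> 0}. S j)" by blast
qed

definition norm1 :: "vtx \<Rightarrow> int" where
  "norm1 w = \<bar>fst w\<bar> + \<bar>snd w\<bar>"

lemma norm1_adj_le: "adj u w \<Longrightarrow> norm1 w \<le> norm1 u + 1"
  by (auto simp: adj_def norm1_def)

lemma burning_subset_ball: "burning (0,0) S i \<subseteq> {w. norm1 w \<le> int i}"
proof (induction i)
  case 0
  then show ?case by (simp add: norm1_def)
next
  case (Suc i)
  show ?case
  proof
    fix w assume "w \<in> burning (0,0) S (Suc i)"
    then consider "w \<in> burning (0,0) S i" | u where "u \<in> burning (0,0) S i" "adj u w"
      by (auto simp: burning_Suc)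
    then show "w \<in> {w. norm1 w \<le> int (Suc i)}"
    proof cases
      case 1
      then show ?thesis using Suc by auto
    next
      case (2 u)
      then show ?thesis using Suc norm1_adj_le[OF 2(2)] by force
    qed
  qed
qed

definition outward_path :: "(nat \<Rightarrow> vtx) \<Rightarrow> bool" where
  "outward_path p \<longleftrightarrow> (\<forall>t. adj (p t) (p (Suc t))) \<and> (\<forall>t. int t \<le> norm1 (p t))"

lemma contained_outward_path_protected:
  assumes contained: "burning (0,0) S (Suc m) = burning (0,0) S m"
    and "p 0 \<in> burning (0,0) S m" "outward_path p"
  obtains t where "p (Suc t) \<in> protected (0,0) S (Suc m)"
proof (rule ccontr)
  assume "\<not> thesis"
  with that have free: "p (Suc t) \<notin> protected (0,0) S (Suc m)" for t by blast
  have "p t \<in> burning (0,0) S m" for t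
  proof (induction t)
    case (Suc t)
    then show ?case
      using contained_burning_closed[OF contained _ _ free] \<open>outward_path p\<close>
      by (auto simp: outward_path_def)
  qed (rule \<open>p 0 \<in> burning (0,0) S m\<close>)
  then have "norm1 (p (Suc m)) \<le> int m" using burning_subset_ball by blast
  moreover have "int (Suc m) \<le> norm1 (p (Suc m))"
    using \<open>outward_path p\<close> unfolding outward_path_def by blast
  ultimately show False by simp
qed

definition escape_family :: "vtx set \<Rightarrow> vtx set \<Rightarrow> ('l \<Rightarrow> nat \<Rightarrow> vtx) \<Rightarrow> 'l set \<Rightarrow> bool" where
  "escape_family B X p L \<longleftrightarrow>
     (\<forall>l\<in>L. p l 0 \<in> B \<and> outward_path (p l) \<and> (\<forall>t. p l (Suc t) \<notin> X)) \<and>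
     (\<forall>l\<in>L. \<forall>l'\<in>L. \<forall>t t'. p l (Suc t) = p l' (Suc t') \<longrightarrow> l = l')"

lemma contained_card_le_protected:
  assumes contained: "burning (0,0) S (Suc m) = burning (0,0) S m"
    and B: "B \<subseteq> burning (0,0) S m"
    and P: "protected (0,0) S (Suc m) \<subseteq> X \<union> Y" "finite Y"
    and fam: "escape_family B X p L"
  shows "card L \<le> card Y"
proof -
  have "\<forall>l\<in>L. \<exists>t. p l (Suc t) \<in> protected (0,0) S (Suc m)"
  proof
    fix l assume "l \<in> L"
    then have "p l 0 \<in> burning (0,0) S m" "outward_path (p l)"
      using B fam unfolding escape_family_def by auto
    then show "\<exists>t. p l (Suc t) \<in> protected (0,0) S (Suc m)"
      using contained_outward_path_protected[OF contained] by blast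
  qed
  then obtain \<tau> where \<tau>: "\<forall>l\<in>L. p l (Suc (\<tau> l)) \<in> protected (0,0) S (Suc m)"
    by (rule bchoice[THEN exE])
  let ?hit = "\<lambda>l. p l (Suc (\<tau> l))"
  have "inj_on ?hit L" using fam unfolding escape_family_def inj_on_def by blast
  moreover have "?hit ` L \<subseteq> Y" using \<tau> P(1) fam unfolding escape_family_def by blast
  ultimately show ?thesis using \<open>finite Y\<close> by (rule card_inj_on_le)
qed

definition toward_origin :: "vtx \<Rightarrow> vtx" where
  "toward_origin w =
     (if fst w > 0 then (fst w - 1, snd w) else if fst w < 0 then (fst w + 1, snd w)
      else if snd w > 0 then (fst w, snd w - 1) else (fst w, snd w + 1))"

lemma adj_toward_origin: "w \<noteq> (0,0) \<Longrightarrow> adj (toward_origin w) w"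
  by (cases w) (auto simp: toward_origin_def adj_def)

lemma norm1_toward_origin: "w \<noteq> (0,0) \<Longrightarrow> norm1 (toward_origin w) = norm1 w - 1"
  by (cases w) (auto simp: toward_origin_def norm1_def)

definition star_shaped :: "vtx set \<Rightarrow> bool" where
  "star_shaped G \<longleftrightarrow> (\<forall>w\<in>G. w \<noteq> (0,0) \<longrightarrow> toward_origin w \<in> G)"

lemma star_shaped_ball: "star_shaped {w. norm1 w \<le> r}"
  by (simp add: star_shaped_def norm1_toward_origin)

lemma star_shaped_burning:
  assumes "star_shaped G" "G \<inter> protected (0,0) S i = {}"
  shows "G \<inter> {w. norm1 w \<le> int i} \<subseteq> burning (0,0) S i"
  using assms(2)
proof (induction i)
  case 0
  have "norm1 w \<le> 0 \<Longrightarrow> w = (0,0)" for w by (cases w) (auto simp: norm1_def)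
  then show ?case by auto
next
  case (Suc i)
  have "G \<inter> protected (0,0) S i = {}"
    using Suc.prems by (auto simp: protected_Suc)
  note IH = Suc.IH[OF this]
  show ?case
  proof clarify
    fix w assume w: "w \<in> G" "norm1 w \<le> int (Suc i)"
    show "w \<in> burning (0,0) S (Suc i)"
    proof (cases "w = (0,0)")
      case True
      then show ?thesis using ignition_burning by simp
    next
      case False
      then have "toward_origin w \<in> burning (0,0) S i" "adj (toward_origin w) w"
        using IH w assms(1) adj_toward_origin[of w] norm1_toward_origin[of w]
        by (auto simp: star_shaped_def)
      moreover have "w \<notin> protected (0,0) S (Suc i)" using w(1) Suc.prems by blast
      ultimately show ?thesis unfolding burning_Suc by blast
    qed
  qed
qed

section \<open>Symmetries of the grid\<close>

definition grid_automorphism :: "(vtx \<Rightarrow> vtx) \<Rightarrow> bool" where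
  "grid_automorphism g \<longleftrightarrow> bij g \<and> (\<forall>p q. adj (g p) (g q) = adj p q)"

lemma grid_automorphism_comp:
  "grid_automorphism g \<Longrightarrow> grid_automorphism h \<Longrightarrow> grid_automorphism (g \<circ> h)"
  by (simp add: grid_automorphism_def bij_comp del: split_paired_All)

lemma state_image:
  assumes "grid_automorphism g"
  shows "state (g v) (\<lambda>i. g ` S i) n = (g ` burning v S n, g ` protected v S n)"
proof (induction n)
  case 0
  then show ?case by simp
next
  case (Suc n)
  have inj: "inj g" and surj: "surj g" and adj: "\<And>p q. adj (g p) (g q) = adj p q"
    using assms by (auto simp: grid_automorphism_def bij_def)
  have "{w. w \<notin> g ` protected v S (Suc n) \<and> (\<exists>u\<in>g ` burning v S n. adj u w)} =
        g ` {w. w \<notin> protected v S (Suc n) \<and> (\<exists>u\<in>burning v S n. adj u w)}"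
  proof (intro set_eqI iffI)
    fix w
    assume w: "w \<in> {w. w \<notin> g ` protected v S (Suc n) \<and> (\<exists>u\<in>g ` burning v S n. adj u w)}"
    obtain w0 where "w = g w0" using surj by (metis surjD)
    with w show "w \<in> g ` {w. w \<notin> protected v S (Suc n) \<and> (\<exists>u\<in>burning v S n. adj u w)}"
      by (auto simp: adj inj_image_mem_iff[OF inj])
  next
    fix w
    assume "w \<in> g ` {w. w \<notin> protected v S (Suc n) \<and> (\<exists>u\<in>burning v S n. adj u w)}"
    then obtain w0 where "w = g w0" "w0 \<notin> protected v S (Suc n)" "\<exists>u\<in>burning v S n. adj u w0"
      by blast
    then show "w \<in> {w. w \<notin> g ` protected v S (Suc n) \<and> (\<exists>u\<in>g ` burning v S n. adj u w)}"
      by (auto simp: adj inj_image_mem_iff[OF inj])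
  qed
  then show ?case
    using Suc by (simp add: prod_eq_iff burning_Suc protected_Suc image_Un del: prod.collapse)
qed

lemma legal_move_image:
  assumes "grid_automorphism g"
  shows "legal_move (g v) f (\<lambda>i. g ` S i) i = legal_move v f S i"
proof -
  have inj: "inj g" using assms by (simp add: grid_automorphism_def bij_def)
  then have "inj_on g A" for A by (rule inj_on_subset) simp
  then show ?thesis
    by (simp add: legal_move_def state_image[OF assms] finite_image_iff card_image
        flip: image_Un image_Int[OF inj])
qed

lemma P1_wins_image:
  assumes "grid_automorphism g"
  shows "P1_wins (g v) f (\<lambda>i. g ` S i) = P1_wins v f S"
proof -
  have "inj g" using assms by (simp add: grid_automorphism_def bij_def)
  then show ?thesis
    by (simp add: P1_wins_def legal_move_image[OF assms] state_image[OF assms] inj_image_eq_iff)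
qed

definition translate :: "vtx \<Rightarrow> vtx \<Rightarrow> vtx" where
  "translate d w = (fst w + fst d, snd w + snd d)"

definition rot90 :: "vtx \<Rightarrow> vtx" where
  "rot90 w = (- snd w, fst w)"

lemma grid_automorphism_translate: "grid_automorphism (translate d)"
proof -
  have "translate (- fst d, - snd d) \<circ> translate d = id" "translate d \<circ> translate (- fst d, - snd d) = id"
    by (auto simp: translate_def)
  then have "bij (translate d)" by (rule o_bij)
  then show ?thesis by (simp add: grid_automorphism_def translate_def adj_def)
qed

lemma grid_automorphism_rot90_pow: "grid_automorphism (rot90 ^^ k)"
proof (induction k)
  case 0
  show ?case using bij_id by (simp add: grid_automorphism_def id_def)
next
  case (Suc k)
  have "(\<lambda>(a, b). (b, - a)) \<circ> rot90 = id" "rot90 \<circ> (\<lambda>(a, b). (b, - a)) = id"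
    by (auto simp: rot90_def)
  then have "bij rot90" by (rule o_bij)
  then have "grid_automorphism rot90" by (simp add: grid_automorphism_def rot90_def adj_def add.commute abs_minus_commute)
  then show ?case
    unfolding funpow.simps(2) using Suc by (rule grid_automorphism_comp)
qed

lemma normalizing_automorphism:
  assumes "y \<noteq> v"
  obtains g where "grid_automorphism g" "g v = (0,0)" "1 \<le> fst (g y)" "0 \<le> snd (g y)"
proof -
  define d where "d = translate (- fst v, - snd v) y"
  have "d \<noteq> (0,0)" using assms by (auto simp: d_def translate_def prod_eq_iff)
  then obtain k where k: "1 \<le> fst ((rot90 ^^ k) d)" "0 \<le> snd ((rot90 ^^ k) d)"
  proof -
    consider "1 \<le> fst d" "0 \<le> snd d" | "snd d \<le> -1" "0 \<le> fst d" | "fst d \<le> -1" "snd d \<le> 0"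
      | "1 \<le> snd d" "fst d \<le> 0"
      using \<open>d \<noteq> (0,0)\<close> by (cases d) fastforce
    then show ?thesis
    proof cases
      case 1
      then show ?thesis using that[of 0] by simp
    next
      case 2
      then show ?thesis using that[of 1] by (simp add: rot90_def)
    next
      case 3
      then show ?thesis using that[of 2] by (simp add: rot90_def numeral_eq_Suc)
    next
      case 4
      then show ?thesis using that[of 3] by (simp add: rot90_def numeral_eq_Suc)
    qed
  qed
  let ?g = "(rot90 ^^ k) \<circ> translate (- fst v, - snd v)"
  have "grid_automorphism ?g"
    by (simp add: grid_automorphism_comp grid_automorphism_rot90_pow grid_automorphism_translate)
  moreover have "?g v = (0,0)"
    by (induction k) (simp_all add: translate_def rot90_def)
  ultimately show ?thesis using that k by (simp add: d_def)
qed

section \<open>The offline strategy\<close>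

text \<open>
  The grid without the origin is the disjoint union of the rays \<open>{(a, k) | a \<ge> 1}\<close>, \<open>k \<ge> 0\<close>,
  and of their rotations by one, two and three quarter turns; \<open>ray_of w = (s, k)\<close> names the ray
  through \<open>w\<close>, \<open>s\<close> counting the quarter turns. Each ray meets a sphere \<open>{w. norm1 w = K}\<close> at
  most once, and \<open>rays K\<close> are the \<open>4K\<close> rays that meet it.
\<close>

definition ray_of :: "vtx \<Rightarrow> int \<times> int" where
  "ray_of w = (let a = fst w; b = snd w in
     if a \<ge> 1 \<and> b \<ge> 0 then (0, b) else if a \<le> 0 \<and> b \<ge> 1 then (1, - a)
     else if a \<le> -1 \<and> b \<le> 0 then (2, - b) else (3, a))"

definition rays :: "nat \<Rightarrow> (int \<times> int) set" where
  "rays K = {0..3} \<times> {0..int K - 1}"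

lemma card_rays: "card (rays K) = 4 * K"
  by (simp add: rays_def card_cartesian_product)

lemma inj_on_ray_of_sphere: "inj_on ray_of {w. norm1 w = r}"
  by (auto simp: inj_on_def ray_of_def norm1_def Let_def split: if_splits)

lemma ray_of_sphere_subset: "1 \<le> N \<Longrightarrow> ray_of ` {w. norm1 w = int N} \<subseteq> rays N"
  by (auto simp: ray_of_def rays_def norm1_def Let_def)

lemma finite_card_sphere:
  assumes "1 \<le> N"
  shows "finite {w. norm1 w = int N}" "card {w. norm1 w = int N} \<le> 4 * N"
proof -
  have "finite (ray_of ` {w. norm1 w = int N})"
    using ray_of_sphere_subset[OF assms] by (rule finite_subset) (simp add: rays_def)
  then show "finite {w. norm1 w = int N}"
    using inj_on_ray_of_sphere by (rule finite_imageD)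
  then show "card {w. norm1 w = int N} \<le> 4 * N"
    using card_inj_on_le[OF inj_on_ray_of_sphere ray_of_sphere_subset[OF assms]]
    by (simp add: card_rays rays_def)
qed

lemma distribute_over_turns:
  fixes f :: "nat \<Rightarrow> nat"
  assumes "finite A" "card A \<le> (\<Sum>i=1..N. f i)"
  shows "\<exists>S. (\<forall>i. S i \<subseteq> A \<and> card (S i) \<le> f i) \<and> (\<forall>i j. i \<noteq> j \<longrightarrow> S i \<inter> S j = {}) \<and>
             (\<Union>i\<in>{1..N}. S i) = A"
  using assms
proof (induction N arbitrary: A)
  case 0
  then show ?case by (intro exI[of _ "\<lambda>_. {}"]) simp
next
  case (Suc N)
  obtain B where B: "B \<subseteq> A" "card B = min (f (Suc N)) (card A)"
    using obtain_subset_with_card_n[of "min (f (Suc N)) (card A)" A] by auto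
  have "card (A - B) \<le> (\<Sum>i=1..N. f i)"
    using Suc.prems B card_Diff_subset[OF finite_subset[OF B(1) Suc.prems(1)] B(1)]
    by (auto simp: min_def)
  then obtain S where S: "\<forall>i. S i \<subseteq> A - B \<and> card (S i) \<le> f i"
    "\<forall>i j. i \<noteq> j \<longrightarrow> S i \<inter> S j = {}" "(\<Union>i\<in>{1..N}. S i) = A - B"
    using Suc.IH[of "A - B"] Suc.prems(1) by blast
  let ?S = "S(Suc N := B)"
  have "\<forall>i. ?S i \<subseteq> A \<and> card (?S i) \<le> f i" using S(1) B by auto
  moreover have "\<forall>i j. i \<noteq> j \<longrightarrow> ?S i \<inter> ?S j = {}" using S(1,2) by auto
  moreover have "(\<Union>i\<in>{1..Suc N}. ?S i) = B \<union> (\<Union>i\<in>{1..N}. S i)"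
    by (auto simp: atLeastAtMostSuc_conv)
  then have "(\<Union>i\<in>{1..Suc N}. ?S i) = A" using S(3) B(1) by auto
  ultimately show ?case by blast
qed

lemma offline_win_origin:
  fixes f :: "nat \<Rightarrow> nat"
  assumes N: "1 \<le> N" and budget: "4 * N \<le> (\<Sum>i=1..N. f i)"
  shows "\<exists>S. P1_wins (0,0) f S"
proof -
  define sphere where "sphere = {w. norm1 w = int N}"
  have fin: "finite sphere" using finite_card_sphere(1)[OF N] by (simp add: sphere_def)
  have "card sphere \<le> (\<Sum>i=1..N. f i)"
    using finite_card_sphere(2)[OF N] budget unfolding sphere_def by linarith
  from distribute_over_turns[OF fin this]
  obtain S where S: "\<forall>i. S i \<subseteq> sphere \<and> card (S i) \<le> f i"
    "\<forall>i j. i \<noteq> j \<longrightarrow> S i \<inter> S j = {}" "(\<Union>i\<in>{1..N}. S i) = sphere"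
    by (elim exE conjE)
  have legal: "legal_move (0,0) f S i" if i: "i \<in> {1..N}" for i
  proof -
    have "burning (0,0) S (i - 1) \<subseteq> {w. norm1 w \<le> int (i - 1)}" by (rule burning_subset_ball)
    moreover have "S i \<subseteq> {w. norm1 w = int N}" using S(1) by (simp add: sphere_def)
    moreover have "{w. norm1 w \<le> int (i - 1)} \<inter> {w. norm1 w = int N} = {}" using i by auto
    ultimately have "S i \<inter> burning (0,0) S (i - 1) = {}" by blast
    moreover have "S j \<inter> S i = {}" if "j \<in> {1..i - 1}" for j
    proof -
      have "j \<noteq> i" using that i by auto
      then show ?thesis using S(2) by blast
    qed
    then have "S i \<inter> protected (0,0) S (i - 1) = {}" unfolding protected_eq_UN by blast
    moreover have "finite (S i)" using S(1) fin finite_subset by blast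
    ultimately show ?thesis using S(1) unfolding legal_move_def by blast
  qed
  obtain m where m: "N = Suc m" using N by (cases N) auto
  have "protected (0,0) S m \<subseteq> sphere" using S(1) by (auto simp: protected_eq_UN)
  then have "{w. norm1 w \<le> int m} \<inter> protected (0,0) S m = {}"
    using m unfolding sphere_def by fastforce
  then have ball: "{w. norm1 w \<le> int m} \<subseteq> burning (0,0) S m"
    using star_shaped_burning[OF star_shaped_ball] by blast
  have "burning (0,0) S (Suc m) \<subseteq> burning (0,0) S m"
  proof
    fix w assume w: "w \<in> burning (0,0) S (Suc m)"
    have "protected (0,0) S (Suc m) = sphere" using S(3) m by (simp add: protected_eq_UN)
    then have "norm1 w \<le> int (Suc m)" "norm1 w \<noteq> int (Suc m)" if "w \<notin> burning (0,0) S m"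
      using w that burning_subset_ball[of S "Suc m"] m unfolding burning_Suc sphere_def by auto
    then show "w \<in> burning (0,0) S m" using ball by fastforce
  qed
  then have "burning (0,0) S N = burning (0,0) S (N - 1)"
    using burning_mono[of m "Suc m" "(0,0)" S] m by simp
  then show ?thesis unfolding P1_wins_def using legal N by blast
qed

lemma offline_win:
  assumes "condition f"
  shows "\<exists>S. P1_wins v f S"
proof -
  obtain N where "1 \<le> N" "4 * N \<le> (\<Sum>i=1..N. f i)" using assms by (auto simp: condition_def)
  then obtain S where "P1_wins (0,0) f S" using offline_win_origin by blast
  then have "P1_wins (translate v (0,0)) f (\<lambda>i. translate v ` S i)"
    by (simp add: P1_wins_image[OF grid_automorphism_translate])
  then show ?thesis by (auto simp: translate_def)
qed

section \<open>Defeating an online strategy\<close>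

text \<open>The first vertex of \<open>ray_walk K l\<close>, at distance \<open>K - 1\<close>, may belong to a neighbouring ray.\<close>

definition ray_walk :: "nat \<Rightarrow> int \<times> int \<Rightarrow> nat \<Rightarrow> vtx" where
  "ray_walk K l t = (let s = fst l; k = snd l; r = int K - 1 - k + int t in
     if s = 0 then (r, k) else if s = 1 then (- k, r) else if s = 2 then (- r, - k) else (k, - r))"

lemma ray_walk_on_ray:
  assumes "l \<in> rays K"
  shows adj_ray_walk: "adj (ray_walk K l t) (ray_walk K l (Suc t))"
    and ray_of_ray_walk: "ray_of (ray_walk K l (Suc t)) = l"
    and norm1_ray_walk: "norm1 (ray_walk K l t) = int K - 1 + int t"
proof -
  obtain s k where l: "l = (s, k)" "s \<in> {0..3}" "0 \<le> k" "k \<le> int K - 1"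
    using assms by (auto simp: rays_def)
  then have "s = 0 \<or> s = 1 \<or> s = 2 \<or> s = 3" by auto
  then show "adj (ray_walk K l t) (ray_walk K l (Suc t))" "ray_of (ray_walk K l (Suc t)) = l"
    "norm1 (ray_walk K l t) = int K - 1 + int t"
    using l by (auto simp: ray_walk_def adj_def ray_of_def norm1_def Let_def)
qed

lemma outward_path_ray_walk: "1 \<le> K \<Longrightarrow> l \<in> rays K \<Longrightarrow> outward_path (ray_walk K l)"
  by (simp add: outward_path_def adj_ray_walk norm1_ray_walk)

lemma escape_familyI_rays:
  assumes "\<And>l. l \<in> L \<Longrightarrow> p l 0 \<in> B" "\<And>l. l \<in> L \<Longrightarrow> outward_path (p l)"
    "\<And>l t. l \<in> L \<Longrightarrow> ray_of (p l (Suc t)) = l" "\<And>l t. l \<in> L \<Longrightarrow> p l (Suc t) \<notin> X"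
  shows "escape_family B X p L"
  using assms unfolding escape_family_def by metis

definition unshadowed :: "vtx \<Rightarrow> int \<Rightarrow> vtx set" where
  "unshadowed x r = {w. norm1 w \<le> r \<and> \<not> (ray_of w = ray_of x \<and> norm1 x \<le> norm1 w)}"

lemma star_shaped_unshadowed:
  assumes "1 \<le> fst x" "0 \<le> snd x"
  shows "star_shaped (unshadowed x r)"
  using assms
  by (auto simp: star_shaped_def unshadowed_def toward_origin_def ray_of_def norm1_def Let_def
      split: if_splits)

lemma unshadowed_burning:
  assumes "1 \<le> fst x" "0 \<le> snd x" "protected (0,0) S i \<subseteq> {x}"
  shows "unshadowed x (int i) \<subseteq> burning (0,0) S i"
proof -
  have "x \<notin> unshadowed x (int i)" by (simp add: unshadowed_def)
  then have "unshadowed x (int i) \<inter> protected (0,0) S i = {}" using assms(3) by blast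
  then have "unshadowed x (int i) \<inter> {w. norm1 w \<le> int i} \<subseteq> burning (0,0) S i"
    by (rule star_shaped_burning[OF star_shaped_unshadowed[OF assms(1,2)]])
  then show ?thesis by (auto simp: unshadowed_def)
qed

lemma escape_family_ray_walks:
  assumes K: "1 \<le> K" and x: "ray_of x \<notin> rays K - D"
    and start: "\<And>l. l \<in> rays K - D \<Longrightarrow> ray_walk K l 0 \<in> B"
    and detours: "\<And>l. l \<in> D \<Longrightarrow> q l 0 \<in> B \<and> outward_path (q l) \<and>
       (\<forall>t. ray_of (q l (Suc t)) = l \<and> q l (Suc t) \<noteq> x)"
  shows "escape_family B {x} (\<lambda>l. if l \<in> D then q l else ray_walk K l) (rays K)"
proof (rule escape_familyI_rays)
  fix l t assume l: "l \<in> rays K"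
  then show "(if l \<in> D then q l else ray_walk K l) 0 \<in> B"
    and "outward_path (if l \<in> D then q l else ray_walk K l)"
    and "ray_of ((if l \<in> D then q l else ray_walk K l) (Suc t)) = l"
    using start detours outward_path_ray_walk[OF K] ray_of_ray_walk by auto
  show "(if l \<in> D then q l else ray_walk K l) (Suc t) \<notin> {x}"
    using l x detours ray_of_ray_walk[OF l, of t] by auto
qed

text \<open>For \<open>K = 3, 4, 5\<close> the ray through \<open>x\<close>, and for \<open>K = 4, 5\<close> also the ray whose walk would
  start behind \<open>x\<close>, are replaced by detours.\<close>

lemma escape_family_turn3: "\<exists>p. escape_family (unshadowed (1,1) 2) {(1,1)} p (rays 3)"
proof
  show "escape_family (unshadowed (1,1) 2) {(1,1)}
     (\<lambda>l. if l \<in> {(0,1)} then (\<lambda>t. if t = 0 then (2,0) else (1 + int t, 1)) else ray_walk 3 l)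
     (rays 3)"
    by (rule escape_family_ray_walks)
      (auto simp: unshadowed_def rays_def ray_walk_def ray_of_def norm1_def outward_path_def
        adj_def Let_def)
qed

lemma escape_family_turn4: "\<exists>p. escape_family (unshadowed (1,0) 3) {(1,0)} p (rays 4)"
proof
  show "escape_family (unshadowed (1,0) 3) {(1,0)}
     (\<lambda>l. if l \<in> {(0,0), (3,3)} then
        (if l = (0,0) then (\<lambda>t. if t = 0 then (2,1) else (1 + int t, 0))
         else (\<lambda>t. if t = 0 then (2,-1) else (3, - int t)))
      else ray_walk 4 l)
     (rays 4)"
    by (rule escape_family_ray_walks)
      (auto simp: unshadowed_def rays_def ray_walk_def ray_of_def norm1_def outward_path_def
        adj_def Let_def)
qed

lemma escape_family_turn5: "\<exists>p. escape_family (unshadowed (2,0) 4) {(2,0)} p (rays 5)"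
proof
  show "escape_family (unshadowed (2,0) 4) {(2,0)}
     (\<lambda>l. if l \<in> {(0,0), (3,4)} then
        (if l = (0,0) then (\<lambda>t. if t = 0 then (3,1) else (2 + int t, 0))
         else (\<lambda>t. if t = 0 then (3,-1) else (4, - int t)))
      else ray_walk 5 l)
     (rays 5)"
    by (rule escape_family_ray_walks)
      (auto simp: unshadowed_def rays_def ray_walk_def ray_of_def norm1_def outward_path_def
        adj_def Let_def)
qed

text \<open>Here \<open>x\<close> may lie on one of the eight rays; that ray is replaced by a path leaving it at
  distance 2 and continuing on rays outside \<open>rays 2\<close>.\<close>

lemma escape_family_turn2:
  assumes x: "1 \<le> fst x" "0 \<le> snd x" "3 \<le> norm1 x"
  shows "\<exists>p. escape_family (unshadowed x 1) {x} p (rays 2)"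
proof
  define detour :: "nat \<Rightarrow> vtx" where
    "detour = (if snd x = 0 then (\<lambda>t. if t = 0 then (1,0) else if t = 1 then (2,0) else (2, 1 - int t))
       else (\<lambda>t. if t = 0 then (0,1) else (1, int t)))"
  let ?p = "\<lambda>l. if l = ray_of x then detour else ray_walk 2 l"
  have B: "unshadowed x 1 = {w. norm1 w \<le> 1}" using x(3) by (auto simp: unshadowed_def)
  have detour: "detour 0 \<in> unshadowed x 1" "outward_path detour"
    "ray_of x \<in> rays 2 \<Longrightarrow> ray_of (detour (Suc t)) = ray_of x \<or> ray_of (detour (Suc t)) \<notin> rays 2"
    "ray_of x \<in> rays 2 \<Longrightarrow> detour (Suc t) \<noteq> x" for t
    using x by (auto simp: B detour_def outward_path_def adj_def norm1_def ray_of_def rays_def)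
  show "escape_family (unshadowed x 1) {x} ?p (rays 2)"
    unfolding escape_family_def
  proof (intro conjI ballI allI impI)
    fix l t assume l: "l \<in> rays 2"
    show "?p l 0 \<in> unshadowed x 1" "outward_path (?p l)"
      using detour(1,2) norm1_ray_walk[OF l] outward_path_ray_walk[OF _ l] by (auto simp: B)
    show "?p l (Suc t) \<notin> {x}"
      using detour(4) l ray_of_ray_walk[OF l, of t] by auto
  next
    fix l l' t t' assume l: "l \<in> rays 2" and l': "l' \<in> rays 2" and eq: "?p l (Suc t) = ?p l' (Suc t')"
    show "l = l'"
      using arg_cong[OF eq, of ray_of] detour(3)[of t] detour(3)[of t'] l l'
        ray_of_ray_walk[OF l, of t] ray_of_ray_walk[OF l', of t']
      by (auto split: if_splits)
  qed
qed

definition attack_turn :: "vtx \<Rightarrow> nat" where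
  "attack_turn x = (if norm1 x = 1 then 4 else if \<bar>fst x\<bar> = 1 \<and> \<bar>snd x\<bar> = 1 then 3
     else if norm1 x = 2 then 5 else 2)"

lemma attack_turn_bounds: "2 \<le> attack_turn x" "attack_turn x \<le> 5"
  by (auto simp: attack_turn_def)

lemma escape_family_attack_turn:
  assumes "1 \<le> fst x" "0 \<le> snd x"
  shows "\<exists>p. escape_family (unshadowed x (int (attack_turn x - 1))) {x} p (rays (attack_turn x))"
proof -
  obtain a b where x: "x = (a, b)" by fastforce
  then have "a = 1 \<and> b = 0 \<or> a = 1 \<and> b = 1 \<or> a = 2 \<and> b = 0 \<or> 3 \<le> norm1 x"
    using assms by (simp add: norm1_def) arith
  then consider "x = (1,0)" | "x = (1,1)" | "x = (2,0)" | "3 \<le> norm1 x"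
    using x by blast
  then show ?thesis
  proof cases
    case 4
    then have "attack_turn x = 2" by (auto simp: attack_turn_def norm1_def)
    then show ?thesis using escape_family_turn2[OF assms 4] by simp
  qed (simp_all add: attack_turn_def norm1_def escape_family_turn3 escape_family_turn4
      escape_family_turn5)
qed

definition challenge :: "nat \<Rightarrow> nat \<Rightarrow> nat" where
  "challenge K i = (if i = 1 then 1 else if i = K then 4 * K - 1 else 0)"

lemma sum_challenge:
  assumes "2 \<le> K"
  shows "(\<Sum>i=1..K. challenge K i) = 4 * K"
proof -
  have "(\<Sum>i=1..K. challenge K i) = (\<Sum>i\<in>{1, K}. challenge K i)"
    using assms by (intro sum.mono_neutral_right) (auto simp: challenge_def)
  then show ?thesis using assms by (simp add: challenge_def)
qed

lemma challenge_defeats: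
  assumes x: "S 1 \<subseteq> {x}" "1 \<le> fst x" "0 \<le> snd x"
  shows "\<not> P1_wins (0,0) (challenge (attack_turn x)) S"
proof
  define K where "K = attack_turn x"
  have K: "2 \<le> K" "K \<le> 5" unfolding K_def by (rule attack_turn_bounds)+
  assume "P1_wins (0,0) (challenge (attack_turn x)) S"
  then obtain m where legal: "\<forall>i\<in>{1..Suc m}. legal_move (0,0) (challenge K) S i"
    and contained: "burning (0,0) S (Suc m) = burning (0,0) S m"
    unfolding K_def by (rule P1_winsE)
  have protected: "protected (0,0) S i \<subseteq> {x} \<union> (if K \<le> i then S K else {})" if "i \<le> Suc m" for i
  proof -
    have "{j\<in>{1..i}. challenge K j \<noteq> 0} \<subseteq> {1} \<union> (if K \<le> i then {K} else {})"
      by (auto simp: challenge_def)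
    then have "protected (0,0) S i \<subseteq> (\<Union>j\<in>{1} \<union> (if K \<le> i then {K} else {}). S j)"
      using protected_subset_active_turns[OF legal that] by blast
    then show ?thesis using x(1) by (auto split: if_splits)
  qed
  show False
  proof (cases "K \<le> Suc m")
    case False
    then have "protected (0,0) S (Suc m) \<subseteq> {x}" using protected[of "Suc m"] by simp
    moreover have path: "outward_path (\<lambda>t. (- int t, 0))"
      by (simp add: outward_path_def adj_def norm1_def)
    obtain t where "(- int (Suc t), 0) \<in> protected (0,0) S (Suc m)"
      by (rule contained_outward_path_protected[OF contained _ path]) (simp add: ignition_burning)
    ultimately show False using x(2) by auto
  next
    case True
    have "legal_move (0,0) (challenge K) S K" using legal True K by simp
    then have SK: "finite (S K)" "card (S K) \<le> 4 * K - 1"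
      using K by (auto simp: legal_move_def challenge_def)
    have "K - 1 \<le> Suc m" "\<not> K \<le> K - 1" using True K by auto
    then have "protected (0,0) S (K - 1) \<subseteq> {x}" using protected[of "K - 1"] by simp
    then have "unshadowed x (int (K - 1)) \<subseteq> burning (0,0) S (K - 1)"
      by (rule unshadowed_burning[OF x(2,3)])
    also have "\<dots> \<subseteq> burning (0,0) S m" using True by (intro burning_mono) simp
    finally have B: "unshadowed x (int (K - 1)) \<subseteq> burning (0,0) S m" .
    obtain p where fam: "escape_family (unshadowed x (int (K - 1))) {x} p (rays K)"
      using escape_family_attack_turn[OF x(2,3)] unfolding K_def by blast
    have "protected (0,0) S (Suc m) \<subseteq> {x} \<union> S K" using protected[of "Suc m"] True by simp
    then have "card (rays K) \<le> card (S K)"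
      by (rule contained_card_le_protected[OF contained B _ SK(1) fam])
    then show False using SK(2) K by (simp add: card_rays)
  qed
qed

lemma first_move_singleton:
  fixes X :: "vtx set"
  assumes "finite X" "card X \<le> 1" "v \<notin> X"
  obtains y where "y \<noteq> v" "X \<subseteq> {y}"
proof (cases "X = {}")
  case True
  then show ?thesis using that[of "(fst v + 1, snd v)"] by (auto simp: prod_eq_iff)
next
  case False
  then have "card X = 1" using assms(1,2) by (simp add: le_antisym Suc_leI card_gt_0_iff)
  then obtain y where "X = {y}" by (auto simp: card_1_singleton_iff)
  then show ?thesis using that[of y] assms(3) by auto
qed

lemma online_strategy_loses:
  "\<exists>K\<in>{2..5}. \<not> P1_wins v (challenge K) (online_play \<sigma> (challenge K))"
proof -
  have first_move: "online_play \<sigma> (challenge K) 1 = \<sigma> [1]" for K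
    by (simp add: online_play_def challenge_def)
  show ?thesis
  proof (cases "\<exists>y. y \<noteq> v \<and> \<sigma> [1] \<subseteq> {y}")
    case True
    then obtain y where y: "y \<noteq> v" "\<sigma> [1] \<subseteq> {y}" by blast
    obtain g where g: "grid_automorphism g" "g v = (0,0)" "1 \<le> fst (g y)" "0 \<le> snd (g y)"
      using normalizing_automorphism[OF y(1)] by blast
    define K where "K = attack_turn (g y)"
    let ?S = "online_play \<sigma> (challenge K)"
    have "g ` ?S 1 \<subseteq> {g y}" using first_move y(2) by auto
    then have "\<not> P1_wins (g v) (challenge K) (\<lambda>i. g ` ?S i)"
      using challenge_defeats[of "\<lambda>i. g ` ?S i"] g(2-4) by (simp add: K_def)
    then have "\<not> P1_wins v (challenge K) ?S" by (simp add: P1_wins_image[OF g(1)])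
    moreover have "K \<in> {2..5}" using attack_turn_bounds by (simp add: K_def)
    ultimately show ?thesis by blast
  next
    case False
    have "\<not> legal_move v (challenge 2) (online_play \<sigma> (challenge 2)) 1"
    proof
      assume "legal_move v (challenge 2) (online_play \<sigma> (challenge 2)) 1"
      then have "finite (\<sigma> [1])" "card (\<sigma> [1]) \<le> 1" "v \<notin> \<sigma> [1]"
        unfolding legal_move_def first_move by (auto simp: challenge_def)
      then obtain y where "y \<noteq> v" "\<sigma> [1] \<subseteq> {y}" by (rule first_move_singleton)
      with False show False by blast
    qed
    then have "\<not> P1_wins v (challenge 2) (online_play \<sigma> (challenge 2))"
      unfolding P1_wins_def by auto
    then show ?thesis by (intro bexI[of _ 2]) auto
  qed
qed

theorem theorem1:
  shows "(\<forall>v f. condition f \<longrightarrow> (\<exists>S. P1_wins v f S)) \<and>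
         (\<forall>v (\<sigma>::online_strategy). \<exists>f. condition f \<and>
             (\<exists>N. 1 \<le> N \<and> N \<le> 5 \<and> (\<Sum>i=1..N. f i) \<ge> 4 * N) \<and>
             (\<forall>i>5. f i = 0) \<and>
             \<not> P1_wins v f (online_play \<sigma> f))"
proof (intro conjI allI impI)
  fix v and f :: "nat \<Rightarrow> nat"
  assume "condition f"
  then show "\<exists>S. P1_wins v f S" by (rule offline_win)
next
  fix v and \<sigma> :: online_strategy
  obtain K where K: "K \<in> {2..5}" "\<not> P1_wins v (challenge K) (online_play \<sigma> (challenge K))"
    using online_strategy_loses by blast
  then have sum: "(\<Sum>i=1..K. challenge K i) = 4 * K" by (intro sum_challenge) simp
  have "condition (challenge K)" unfolding condition_def using sum K(1) by (intro exI[of _ K]) simp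
  moreover have "\<exists>N. 1 \<le> N \<and> N \<le> 5 \<and> (\<Sum>i=1..N. challenge K i) \<ge> 4 * N"
    using sum K(1) by (intro exI[of _ K]) simp
  moreover have "\<forall>i>5. challenge K i = 0" using K(1) by (simp add: challenge_def)
  ultimately show "\<exists>f. condition f \<and> (\<exists>N. 1 \<le> N \<and> N \<le> 5 \<and> (\<Sum>i=1..N. f i) \<ge> 4 * N) \<and>
      (\<forall>i>5. f i = 0) \<and> \<not> P1_wins v f (online_play \<sigma> f)"
    using K(2) by blast
qed

end
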